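(* For all $n\ge1$ and $a>0$, writing $R_k=R_k(a)$, $$R_{n-1}R_{n+1}(R_nR_{n-1}+8n)(R_{n+1}R_n+8n+8)=\Big[8a^2R_n+R_nR_{n-1}R_{n+1}-4(aR_n+n+1)R_{n+1}-4(aR_n+n)R_{n-1}\Big]^2.$$
   Context: Fix $a>0$. Let $w(x)=e^{-x^2}\chi_{\mathbb{R}\setminus(-a,a)}(x)$. Let $P_n$ be the monic orthogonal polynomials for $w$ on $\mathbb{R}$, with $h_n=\int P_n^2w\,dx$. Define $$R_n(a)=\frac{2e^{-a^2}P_n(a)^2}{h_n(a)}.$$ *)

theory Defs
  imports "HOL-Analysis.Analysis" "HOL-Computational_Algebra.Polynomial"
begin

definition wgt :: "real \<Rightarrow> real \<Rightarrow> real" where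
  "wgt a x = exp (- (x^2)) * indicator (UNIV - {-a<..<a}) x"

definition OP :: "real \<Rightarrow> nat \<Rightarrow> real poly" where
  "OP a n = (THE p. degree p = n \<and> lead_coeff p = 1 \<and>
      (\<forall>q::real poly. degree q < n \<longrightarrow>
          (LINT x|lborel. poly p x * poly q x * wgt a x) = 0))"

definition hn :: "real \<Rightarrow> nat \<Rightarrow> real" where
  "hn a n = (LINT x|lborel. (poly (OP a n) x)^2 * wgt a x)"

definition Rn :: "real \<Rightarrow> nat \<Rightarrow> real" where
  "Rn a n = 2 * exp (- (a^2)) * (poly (OP a n) a)^2 / hn a n"

end

theory Submission
  imports Defs "HOL-Probability.Distributions" "HOL-Real_Asymp.Real_Asymp"
begin

text \<open>Write \<open>\<langle>p\<rangle>\<close> for \<open>\<integral> p w dx\<close>. Integration by parts against \<open>exp(-x^2)\<close> on the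
  two half-lines \<open>|x| \<ge> a\<close> gives \<open>\<langle>p'\<rangle> = \<langle>2xp\<rangle> - exp(-a^2) (p(a) - p(-a))\<close>. Applied to
  \<open>p = P(k+1) P(k)\<close>, with orthogonality and the parity \<open>P(k)(-x) = (-1)^k P(k)(x)\<close> coming from
  the symmetry of \<open>w\<close>, this yields \<open>(k+1) h(k) = 2 h(k+1) - 2 exp(-a^2) P(k+1)(a) P(k)(a)\<close>.
  These relations for \<open>k = n-1, n\<close>, the definitions \<open>R(k) h(k) = 2 exp(-a^2) P(k)(a)^2\<close> and the
  three-term recurrence \<open>P(n+1) = x P(n) - (h(n)/h(n-1)) P(n-1)\<close> at \<open>x = a\<close> generate an ideal
  containing the claimed identity, once \<open>P(k)(a)\<close> and \<open>h(k)\<close> are eliminated.\<close>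

section \<open>Polynomials against the Gaussian\<close>

lemma poly_times_gauss_eq_sum:
  "poly p x * exp (-(x^2)) = (\<Sum>i\<le>degree p. coeff p i * (x^i * exp (-(x^2))))"
  for p :: "real poly"
  by (simp add: poly_altdef sum_distrib_left mult_ac)

lemma integrable_power_gauss: "integrable lborel (\<lambda>x::real. x^k * exp (-(x^2)))"
proof -
  have density: "normal_density 0 (1 / sqrt 2) x = exp (-(x^2)) / sqrt pi" for x
    by (simp add: normal_density_def power2_eq_square real_sqrt_divide real_sqrt_mult divide_simps)
  have "integrable lborel (\<lambda>x. sqrt pi * (normal_density 0 (1 / sqrt 2) x * (x - 0)^k))"
    by (intro integrable_mult_right integrable_normal_moment) auto
  then show ?thesis by (simp add: density mult_ac)
qed

lemma integrable_poly_gauss: "integrable lborel (\<lambda>x::real. poly p x * exp (-(x^2)))"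
  unfolding poly_times_gauss_eq_sum
  by (intro Bochner_Integration.integrable_sum integrable_mult_right integrable_power_gauss)

lemma integrable_indicator_poly_gauss:
  "S \<in> sets lborel \<Longrightarrow> integrable lborel (\<lambda>x::real. indicator S x * (poly p x * exp (-(x^2))))"
  using integrable_real_mult_indicator[of S lborel, OF _ integrable_poly_gauss[of p]]
  by (simp add: mult.commute)

lemma power_gauss_tendsto_0: "((\<lambda>x::real. x^k * exp (-(x^2))) \<longlongrightarrow> 0) at_top"
proof -
  have "((\<lambda>x::real. x^k / exp x * exp (x - x^2)) \<longlongrightarrow> 0 * 0) at_top"
    by (intro tendsto_mult tendsto_power_div_exp_0) real_asymp
  moreover have "x^k / exp x * exp (x - x^2) = x^k * exp (-(x^2))" for x :: real
    by (simp add: exp_diff exp_minus field_simps)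
  ultimately show ?thesis by simp
qed

lemma poly_gauss_tendsto_0: "((\<lambda>x::real. poly p x * exp (-(x^2))) \<longlongrightarrow> 0) at_top"
proof -
  have "((\<lambda>x::real. \<Sum>i\<le>degree p. coeff p i * (x^i * exp (-(x^2))))
          \<longlongrightarrow> (\<Sum>i\<le>degree p. coeff p i * 0)) at_top"
    by (intro tendsto_sum tendsto_mult tendsto_const power_gauss_tendsto_0)
  then show ?thesis unfolding poly_times_gauss_eq_sum by simp
qed

text \<open>\<open>(p exp(-x^2))' = (p' - 2xp) exp(-x^2)\<close>, and the antiderivative vanishes at \<open>+\<infinity>\<close>.\<close>

lemma integral_ray_gauss_pderiv:
  fixes p :: "real poly"
  shows "(LINT x|lborel. indicator {c..} x * (poly (pderiv p - [:0,2:] * p) x * exp (-(x^2))))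
          = - (poly p c * exp (-(c^2)))"
proof -
  define g where "g x = poly (pderiv p - [:0,2:] * p) x * exp (-(x^2))" for x
  define F where "F x = poly p x * exp (-(x^2))" for x
  have F_deriv: "(F has_real_derivative g x) (at x)" for x
  proof -
    have "(F has_real_derivative
            poly (pderiv p) x * exp (-(x^2)) + poly p x * (exp (-(x^2)) * (-(2*x)))) (at x)"
      unfolding F_def by (rule derivative_eq_intros poly_DERIV refl | simp)+
    then show ?thesis by (simp add: g_def algebra_simps)
  qed
  have "continuous_on S g" for S
    unfolding g_def by (intro continuous_intros)
  then have partial: "(LINT x|lborel. indicator {..y} x *\<^sub>R (indicator {c..} x * g x)) = F y - F c"
    if "c \<le> y" for y
  proof -
    have "(LINT x|lborel. indicator {..y} x *\<^sub>R (indicator {c..} x * g x))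
          = (LINT x|lborel. indicator {c..y} x *\<^sub>R g x)"
      by (intro Bochner_Integration.integral_cong) (auto split: split_indicator)
    also have "\<dots> = F y - F c"
      using \<open>c \<le> y\<close> \<open>\<And>S. continuous_on S g\<close>
      by (intro integral_FTC_atLeastAtMost)
        (auto intro: has_vector_derivative_at_within
          F_deriv[THEN has_real_derivative_iff_has_vector_derivative[THEN iffD1]])
    finally show ?thesis .
  qed
  have "((\<lambda>y. LINT x|lborel. indicator {..y} x *\<^sub>R (indicator {c..} x * g x))
          \<longlongrightarrow> (LINT x|lborel. indicator {c..} x * g x)) at_top"
    unfolding g_def by (intro tendsto_integral_at_top integrable_indicator_poly_gauss) auto
  moreover have "((\<lambda>y. LINT x|lborel. indicator {..y} x *\<^sub>R (indicator {c..} x * g x))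
          \<longlongrightarrow> 0 - F c) at_top"
  proof (rule Lim_transform_eventually)
    show "((\<lambda>y. F y - F c) \<longlongrightarrow> 0 - F c) at_top"
      unfolding F_def by (intro tendsto_diff poly_gauss_tendsto_0 tendsto_const)
    show "\<forall>\<^sub>F y in at_top. F y - F c = (LINT x|lborel. indicator {..y} x *\<^sub>R (indicator {c..} x * g x))"
      using partial by (auto simp: eventually_at_top_linorder intro!: exI[of _ c])
  qed
  ultimately have "(LINT x|lborel. indicator {c..} x * g x) = 0 - F c"
    by (rule tendsto_unique[OF trivial_limit_at_top_linorder])
  then show ?thesis by (simp add: g_def F_def)
qed

definition wint :: "real \<Rightarrow> real poly \<Rightarrow> real" where
  "wint a p = (LINT x|lborel. poly p x * wgt a x)"

lemma wgt_nonneg: "wgt a x \<ge> 0"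
  by (simp add: wgt_def)

lemma wgt_minus: "wgt a (- x) = wgt a x"
  by (simp add: wgt_def indicator_def) linarith

lemma integrable_poly_wgt: "integrable lborel (\<lambda>x. poly p x * wgt a x)"
proof -
  have "integrable lborel (\<lambda>x::real. indicator (UNIV - {-a<..<a}) x * (poly p x * exp (-(x^2))))"
    by (intro integrable_indicator_poly_gauss) auto
  then show ?thesis by (simp add: wgt_def mult_ac)
qed

lemma wint_0 [simp]: "wint a 0 = 0"
  by (simp add: wint_def)

lemma wint_add: "wint a (p + q) = wint a p + wint a q"
  by (simp add: wint_def distrib_right integrable_poly_wgt)

lemma wint_diff: "wint a (p - q) = wint a p - wint a q"
  by (simp add: wint_def left_diff_distrib integrable_poly_wgt)

lemma wint_minus: "wint a (- p) = - wint a p"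
  by (simp add: wint_def)

lemma wint_smult: "wint a (smult c p) = c * wint a p"
  by (simp add: wint_def mult.assoc)

lemma wint_sum: "wint a (\<Sum>i\<in>A. f i) = (\<Sum>i\<in>A. wint a (f i))"
  by (induction A rule: infinite_finite_induct) (auto simp: wint_add)

lemma wint_reflect: "wint a (p \<circ>\<^sub>p [:0, -1:]) = wint a p"
proof -
  have "wint a p = \<bar>-1\<bar> *\<^sub>R (LINT x|lborel. poly p (0 + (-1) * x) * wgt a (0 + (-1) * x))"
    unfolding wint_def by (rule lborel_integral_real_affine) simp
  then show ?thesis by (simp add: wint_def poly_pcompose wgt_minus)
qed

lemma wint_odd_eq_0: "p \<circ>\<^sub>p [:0, -1:] = - p \<Longrightarrow> wint a p = 0"
  using wint_reflect[of a p] wint_minus[of a p] by simp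

lemma wint_square_pos:
  assumes "p \<noteq> 0"
  shows "wint a (p * p) > 0"
proof -
  have "wint a (p * p) \<ge> 0"
    unfolding wint_def by (intro integral_nonneg_AE AE_I2) (simp add: wgt_nonneg)
  moreover have "wint a (p * p) \<noteq> 0"
  proof
    assume "wint a (p * p) = 0"
    then have "AE x in lborel. poly (p * p) x * wgt a x = 0"
      using integrable_poly_wgt[of "p * p" a]
      by (subst (asm) wint_def, subst (asm) integral_nonneg_eq_0_iff_AE) (auto simp: wgt_nonneg)
    then obtain N where N: "{x. poly (p * p) x * wgt a x \<noteq> 0} \<subseteq> N"
        "emeasure lborel N = 0" "N \<in> sets lborel"
      by (auto elim!: AE_E)
    define I where "I = {\<bar>a\<bar><..<\<bar>a\<bar> + 1}"
    have "I - {x. poly p x = 0} \<subseteq> N"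
      using N(1) by (auto simp: I_def wgt_def indicator_def)
    moreover have "emeasure lborel (I - {x. poly p x = 0}) = 1"
      unfolding I_def using poly_roots_finite[OF assms]
      by (subst emeasure_Diff_null_set) (auto intro: finite_imp_null_set_lborel)
    ultimately show False
      using emeasure_mono[of _ N lborel] N(2,3) by fastforce
  qed
  ultimately show ?thesis by linarith
qed

text \<open>The weight splits into the two rays \<open>[a,\<infinity>)\<close> and \<open>(-\<infinity>,-a]\<close>; the second is mapped to the
  first by \<open>x \<mapsto> -x\<close>, so the ray lemma is applied to \<open>p(x)\<close> and to \<open>p(-x)\<close>.\<close>

lemma wint_pderiv:
  assumes "a > 0"
  shows "wint a (pderiv p) = wint a ([:0,2:] * p) - exp (-(a^2)) * (poly p a - poly p (-a))"
proof -
  define D where "D q = pderiv q - [:0,2:] * q" for q :: "real poly"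
  define G where "G q x = poly (D q) x * exp (-(x^2))" for q x
  define p' where "p' = p \<circ>\<^sub>p [:0, -1:]"
  have split: "wgt a x = indicator {a..} x * exp (-(x^2)) + indicator {..-a} x * exp (-(x^2))" for x
    using assms by (auto simp: wgt_def indicator_def)
  have "wint a (D p) = (LINT x|lborel. indicator {a..} x * G p x + indicator {..-a} x * G p x)"
    unfolding wint_def split G_def by (intro Bochner_Integration.integral_cong) (auto simp: algebra_simps)
  also have "\<dots> = (LINT x|lborel. indicator {a..} x * G p x) + (LINT x|lborel. indicator {..-a} x * G p x)"
    unfolding G_def by (intro Bochner_Integration.integral_add integrable_indicator_poly_gauss) auto
  also have "(LINT x|lborel. indicator {a..} x * G p x) = - (poly p a * exp (-(a^2)))"
    unfolding G_def D_def by (rule integral_ray_gauss_pderiv)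
  also have "(LINT x|lborel. indicator {..-a} x * G p x)
      = \<bar>-1\<bar> *\<^sub>R (LINT x|lborel. indicator {..-a} (0 + (-1) * x) * G p (0 + (-1) * x))"
    by (rule lborel_integral_real_affine) simp
  also have "\<dots> = - (LINT x|lborel. indicator {a..} x * G p' x)"
    unfolding G_def D_def p'_def
    by (simp add: pderiv_pcompose poly_pcompose pderiv_pCons algebra_simps indicator_def flip: integral_minus)
  also have "(LINT x|lborel. indicator {a..} x * G p' x) = - (poly p' a * exp (-(a^2)))"
    unfolding G_def D_def by (rule integral_ray_gauss_pderiv)
  finally have "wint a (D p) = - (poly p a * exp (-(a^2))) + poly p' a * exp (-(a^2))"
    by simp
  moreover have "wint a (D p) = wint a (pderiv p) - wint a ([:0,2:] * p)"
    unfolding D_def by (rule wint_diff)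
  ultimately show ?thesis by (simp add: p'_def poly_pcompose algebra_simps)
qed

section \<open>Monic orthogonal polynomials\<close>

definition is_OP :: "real \<Rightarrow> nat \<Rightarrow> real poly \<Rightarrow> bool" where
  "is_OP a n p \<longleftrightarrow> degree p = n \<and> lead_coeff p = 1 \<and> (\<forall>q. degree q < n \<longrightarrow> wint a (p * q) = 0)"

lemma OP_eq_The_is_OP: "OP a n = (THE p. is_OP a n p)"
  by (simp add: OP_def is_OP_def wint_def mult_ac)

lemma monic_division_step:
  fixes P q :: "real poly"
  assumes "degree P = n" "lead_coeff P = 1" "degree q \<le> n"
  obtains r where "q = smult (coeff q n) P + r" "r = 0 \<or> degree r < n"
proof
  let ?r = "q - smult (coeff q n) P"
  have "degree ?r \<le> n"
    using assms by (intro degree_diff_le) (auto intro: order_trans[OF degree_smult_le])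
  moreover have "coeff ?r n = 0"
    using assms by simp
  ultimately show "?r = 0 \<or> degree ?r < n"
    by (metis le_neq_implies_less leading_coeff_0_iff)
qed simp

lemma wint_orth_lower_degrees:
  fixes P :: "nat \<Rightarrow> real poly"
  assumes P: "\<And>k. k < n \<Longrightarrow> degree (P k) = k \<and> lead_coeff (P k) = 1"
    and orth: "\<And>k. k < n \<Longrightarrow> wint a (p * P k) = 0"
    and "degree q < n"
  shows "wint a (p * q) = 0"
  using \<open>degree q < n\<close>
proof (induction "degree q" arbitrary: q rule: less_induct)
  case less
  define m where "m = degree q"
  obtain r where r: "q = smult (coeff q m) (P m) + r" "r = 0 \<or> degree r < m"
    by (rule monic_division_step[of "P m" m q]) (use P[of m] less.prems in \<open>auto simp: m_def\<close>)
  have "wint a (p * r) = 0"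
    using r(2) less m_def by (cases "r = 0") auto
  then show ?case
    using orth[of m] less.prems
    by (subst r(1)) (simp add: distrib_left wint_add wint_smult m_def)
qed

lemma is_OP_unique:
  assumes "is_OP a n p" "is_OP a n p'"
  shows "p = p'"
proof (rule ccontr)
  assume "p \<noteq> p'"
  have "coeff p n = 1"
    using assms by (auto simp: is_OP_def)
  moreover obtain r where "p = smult (coeff p n) p' + r" "r = 0 \<or> degree r < n"
    by (rule monic_division_step[of p' n p]) (use assms in \<open>auto simp: is_OP_def\<close>)
  ultimately have "degree (p - p') < n"
    using \<open>p \<noteq> p'\<close> by auto
  then have "wint a ((p - p') * (p - p')) = 0"
    using assms unfolding is_OP_def by (simp add: left_diff_distrib wint_diff)
  with wint_square_pos[of "p - p'" a] \<open>p \<noteq> p'\<close> show False by simp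
qed

lemma is_OP_OP_if_exists: "is_OP a n p \<Longrightarrow> is_OP a n (OP a n)"
  unfolding OP_eq_The_is_OP by (rule theI) (auto intro: is_OP_unique)

text \<open>Gram--Schmidt: subtract from \<open>x^n\<close> its projections onto \<open>P(0), \<dots>, P(n-1)\<close>.\<close>

lemma is_OP_exists: "\<exists>p. is_OP a n p"
proof (induction n rule: less_induct)
  case (less n)
  define P where "P = OP a"
  have P: "degree (P k) = k \<and> lead_coeff (P k) = 1"
      and P_orth: "degree q < k \<Longrightarrow> wint a (P k * q) = 0" if "k < n" for k q
    using is_OP_OP_if_exists less[OF that] unfolding P_def is_OP_def by blast+
  have P_orthogonal: "wint a (P k * P j) = 0" if "k < n" "j < n" "k \<noteq> j" for k j
  proof (cases "j < k")
    case True
    then show ?thesis using that P[of j] P_orth[of k "P j"] by simp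
  next
    case False
    then show ?thesis using that P[of k] P_orth[of j "P k"] by (simp add: mult.commute)
  qed
  define c where "c k = wint a (monom 1 n * P k) / wint a (P k * P k)" for k
  define S where "S = (\<Sum>k<n. smult (c k) (P k))"
  define p where "p = monom 1 n - S"
  have "degree S < n \<or> S = 0"
  proof (cases n)
    case (Suc m)
    then have "degree S \<le> m"
      unfolding S_def using P by (intro degree_sum_le) (auto intro: order_trans[OF degree_smult_le])
    then show ?thesis using Suc by simp
  qed (simp add: S_def)
  then have "degree p \<le> n" "coeff p n = 1"
    unfolding p_def by (auto simp: degree_monom_eq coeff_eq_0 intro: degree_diff_le)
  then have "degree p = n" "lead_coeff p = 1"
    using le_degree[of p n] by auto
  moreover have "wint a (p * P j) = 0" if "j < n" for j
  proof -
    have "wint a (P j * P j) > 0"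
      using P[OF that] by (intro wint_square_pos) auto
    moreover have "(\<Sum>k<n. c k * wint a (P k * P j)) = c j * wint a (P j * P j)"
      using that P_orthogonal by (subst sum.remove[of _ j]) (auto intro!: sum.neutral)
    ultimately show ?thesis
      unfolding p_def S_def c_def
      by (simp add: left_diff_distrib wint_diff sum_distrib_right wint_sum wint_smult)
  qed
  ultimately have "is_OP a n p"
    unfolding is_OP_def using P wint_orth_lower_degrees[of n P a p] by blast
  then show ?case ..
qed

lemma is_OP_OP: "is_OP a n (OP a n)"
  using is_OP_exists is_OP_OP_if_exists by blast

lemma OP_unique: "is_OP a n p \<Longrightarrow> OP a n = p"
  using is_OP_OP is_OP_unique by blast

lemma degree_OP [simp]: "degree (OP a n) = n"
  and coeff_OP_degree [simp]: "coeff (OP a n) n = 1"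
  and wint_OP_orth: "degree q < n \<Longrightarrow> wint a (OP a n * q) = 0"
  using is_OP_OP[of a n] unfolding is_OP_def by auto

lemma hn_eq_wint: "hn a n = wint a (OP a n * OP a n)"
  by (simp add: hn_def wint_def power2_eq_square)

lemma hn_pos: "hn a n > 0"
  unfolding hn_eq_wint by (rule wint_square_pos) (metis coeff_OP_degree coeff_0 zero_neq_one)

lemma wint_orth_upto_degree:
  assumes orth: "\<And>r. degree r < n \<Longrightarrow> wint a (d * r) = 0" and "degree q \<le> n"
  shows "wint a (d * q) = coeff q n * wint a (d * OP a n)"
proof -
  obtain r where r: "q = smult (coeff q n) (OP a n) + r" "r = 0 \<or> degree r < n"
    by (rule monic_division_step[of "OP a n" n q]) (use \<open>degree q \<le> n\<close> in auto)
  have "wint a (d * r) = 0"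
    using r(2) orth by auto
  then show ?thesis
    by (subst r(1)) (simp add: distrib_left wint_add wint_smult)
qed

lemma wint_OP_mult:
  "degree q \<le> n \<Longrightarrow> wint a (OP a n * q) = coeff q n * hn a n"
  using wint_orth_upto_degree[of n a "OP a n" q] wint_OP_orth by (simp add: hn_eq_wint)

lemma pcompose_reflect_reflect: "p \<circ>\<^sub>p [:0, -1:] \<circ>\<^sub>p [:0, -1:] = (p :: real poly)"
proof -
  have "[:0, -1::real:] \<circ>\<^sub>p [:0, -1:] = [:0, 1:]"
    by (simp add: pcompose_pCons)
  then show ?thesis
    by (metis pcompose_assoc pcompose_idR)
qed

lemma OP_reflect: "OP a n \<circ>\<^sub>p [:0, -1:] = smult ((-1)^n) (OP a n)"
proof -
  define Q where "Q = smult ((-1)^n) (OP a n \<circ>\<^sub>p [:0, -1:])"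
  have "is_OP a n Q"
    unfolding is_OP_def
  proof (intro conjI allI impI)
    show "degree Q = n"
      by (simp add: Q_def degree_pcompose)
    have "lead_coeff (OP a n \<circ>\<^sub>p [:0, -1:]) = (-1)^n"
      by (simp add: lead_coeff_comp)
    then show "lead_coeff Q = 1"
      by (simp add: Q_def degree_pcompose flip: power_mult_distrib)
    fix q :: "real poly"
    assume "degree q < n"
    have "Q * q = smult ((-1)^n) ((OP a n * (q \<circ>\<^sub>p [:0, -1:])) \<circ>\<^sub>p [:0, -1:])"
      by (simp add: Q_def pcompose_mult pcompose_reflect_reflect)
    then show "wint a (Q * q) = 0"
      using \<open>degree q < n\<close> by (simp add: wint_smult wint_reflect wint_OP_orth degree_pcompose)
  qed
  then have "smult ((-1)^n) (OP a n) = smult ((-1)^n) Q"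
    by (simp add: OP_unique)
  moreover have "(-1::real)^n * (-1)^n = 1"
    by (simp flip: power_add)
  ultimately show ?thesis
    by (simp add: Q_def)
qed

lemma poly_OP_minus: "poly (OP a n) (- x) = (-1)^n * poly (OP a n) x"
  using arg_cong[OF OP_reflect[of a n], of "\<lambda>p. poly p x"] by (simp add: poly_pcompose)

section \<open>The three-term recurrence and the integration-by-parts identity\<close>

lemma OP_Suc_Suc:
  "OP a (Suc (Suc n)) = pCons 0 (OP a (Suc n)) - smult (hn a (Suc n) / hn a n) (OP a n)"
proof -
  define \<beta> where "\<beta> = hn a (Suc n) / hn a n"
  define d where "d = pCons 0 (OP a (Suc n)) - OP a (Suc (Suc n)) - smult \<beta> (OP a n)"
  have "degree d \<le> Suc n"
  proof (rule degree_le, intro allI impI)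
    fix i assume "Suc n < i"
    then show "coeff d i = 0"
      by (cases "i = Suc (Suc n)") (auto simp: d_def coeff_pCons coeff_eq_0 split: nat.split)
  qed
  have d_orth: "wint a (d * r) = 0" if "degree r < Suc n" for r
  proof -
    have "wint a (pCons 0 (OP a (Suc n)) * r) = coeff r n * hn a (Suc n)"
      using that wint_OP_mult[of "pCons 0 r" "Suc n" a]
      by (simp add: mult.commute degree_pCons_eq_if)
    moreover have "wint a (OP a n * r) = coeff r n * hn a n"
      using that by (intro wint_OP_mult) simp
    ultimately show ?thesis
      using that hn_pos[of a n]
      by (simp add: d_def \<beta>_def left_diff_distrib wint_diff wint_smult wint_OP_orth)
  qed
  have "wint a (pCons 0 (OP a (Suc n)) * OP a (Suc n)) = 0"
    by (intro wint_odd_eq_0)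
      (simp add: poly_eq_poly_eq_iff[symmetric] fun_eq_iff poly_pcompose poly_OP_minus)
  moreover have "wint a (OP a n * OP a (Suc n)) = 0"
    by (subst mult.commute) (simp add: wint_OP_orth)
  ultimately have "wint a (d * OP a (Suc n)) = 0"
    by (simp add: d_def left_diff_distrib wint_diff wint_smult wint_OP_orth)
  then have "wint a (d * d) = 0"
    using wint_orth_upto_degree[OF d_orth \<open>degree d \<le> Suc n\<close>] by simp
  then have "d = 0"
    using wint_square_pos[of d a] by fastforce
  then show ?thesis
    by (simp add: d_def \<beta>_def algebra_simps)
qed

lemma hn_Suc_by_parts:
  assumes "a > 0"
  shows "real (Suc k) * hn a k
           = 2 * hn a (Suc k) - 2 * exp (-(a^2)) * poly (OP a (Suc k)) a * poly (OP a k) a"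
proof -
  define f where "f = OP a (Suc k) * OP a k"
  have "wint a (pderiv f) = wint a (OP a k * pderiv (OP a (Suc k)))"
    by (simp add: f_def pderiv_mult wint_add wint_OP_orth degree_pderiv mult.commute)
  also have "\<dots> = real (Suc k) * hn a k"
    by (subst wint_OP_mult) (simp_all add: degree_pderiv coeff_pderiv)
  finally have lhs: "wint a (pderiv f) = real (Suc k) * hn a k" .
  have "[:0,2:] * f = smult 2 (OP a (Suc k) * pCons 0 (OP a k))"
    by (simp add: f_def poly_eq_poly_eq_iff[symmetric] fun_eq_iff)
  then have rhs: "wint a ([:0,2:] * f) = 2 * hn a (Suc k)"
    by (simp only: wint_smult, subst wint_OP_mult) simp_all
  have "poly f a - poly f (-a) = 2 * poly (OP a (Suc k)) a * poly (OP a k) a"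
    by (simp add: f_def poly_OP_minus)
  then show ?thesis
    using wint_pderiv[OF assms, of f] lhs rhs by simp
qed

lemma Rn_times_hn: "Rn a k * hn a k = 2 * exp (-(a^2)) * (poly (OP a k) a)^2"
  using hn_pos[of a k] by (simp add: Rn_def)

lemma Rn_identity_algebraic:
  fixes E a p0 p1 p2 h0 h1 h2 A B C n :: real
  assumes "A * h0 = 2 * E * p0^2" "B * h1 = 2 * E * p1^2" "C * h2 = 2 * E * p2^2"
    and "n * h0 = 2 * h1 - 2 * E * p1 * p0" "(n + 1) * h1 = 2 * h2 - 2 * E * p2 * p1"
    and "p2 * h0 = a * p1 * h0 - h1 * p0"
    and "h0 \<noteq> 0" "h1 \<noteq> 0" "h2 \<noteq> 0"
  shows "A * C * (B * A + 8 * n) * (C * B + 8 * n + 8)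
         = (8 * a^2 * B + B * A * C - 4 * (a * B + n + 1) * C - 4 * (a * B + n) * A)^2"
  using assms by algebra

theorem mainTheorem5:
  fixes a :: real and n :: nat
  assumes "a > 0" and "n \<ge> 1"
  shows "Rn a (n-1) * Rn a (n+1) * (Rn a n * Rn a (n-1) + 8 * real n)
           * (Rn a (n+1) * Rn a n + 8 * real n + 8)
         = (8 * a^2 * Rn a n + Rn a n * Rn a (n-1) * Rn a (n+1)
            - 4 * (a * Rn a n + real n + 1) * Rn a (n+1)
            - 4 * (a * Rn a n + real n) * Rn a (n-1))^2"
proof -
  obtain m where n: "n = Suc m"
    using \<open>n \<ge> 1\<close> by (cases n) auto
  have recurrence: "poly (OP a (Suc (Suc m))) a * hn a m
                      = a * poly (OP a (Suc m)) a * hn a m - hn a (Suc m) * poly (OP a m) a"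
    using hn_pos[of a m] by (simp add: OP_Suc_Suc algebra_simps)
  have by_parts_n: "real n * hn a m = 2 * hn a n - 2 * exp (-(a^2)) * poly (OP a n) a * poly (OP a m) a"
    using hn_Suc_by_parts[OF \<open>a > 0\<close>, of m] by (simp add: n)
  have by_parts_Suc_n: "(real n + 1) * hn a n
      = 2 * hn a (Suc n) - 2 * exp (-(a^2)) * poly (OP a (Suc n)) a * poly (OP a n) a"
    using hn_Suc_by_parts[OF \<open>a > 0\<close>, of n] by (simp add: add.commute)
  show ?thesis
    using Rn_identity_algebraic[OF Rn_times_hn[of a m] Rn_times_hn[of a n] Rn_times_hn[of a "Suc n"]
        by_parts_n by_parts_Suc_n recurrence[folded n]] hn_pos[of a]
    by (simp add: n less_imp_neq[symmetric])
qed

end
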